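(* Let $K$ be a field and $f\colon R\to S$ a morphism of Zinbiel algebras. If $H^3_{\mathrm{Zinb}}(f,f)=0$, then every $2$-cocycle $\theta_1\in C^2_{\mathrm{Zinb}}(f,f)$ is the infinitesimal of some deformation of $f$.
   Context: A Zinbiel algebra over $K$ is a $K$-vector space $R$ with bilinear product $x\cdot y$ (also written $m_R(x,y)$) satisfying $(x\cdot y)\cdot z=x\cdot(y\cdot z)+x\cdot(z\cdot y)$. A morphism $f\colon R\to S$ is a linear map with $f(x\cdot y)=f(x)\cdot f(y)$. $R$ is a bimodule over itself, $S$ over itself, and $S$ is an $R$-bimodule via $r\cdot s=f(r)\cdot s$, $s\cdot r=s\cdot f(r)$. For a bimodule $A$ over $R$ and $1\le n\le4$, $C^n_{\mathrm{Zinb}}(R,A)=\mathrm{Hom}_K(R^{\otimes n},A)$ with $(d^1\varphi)(x,y)=x\cdot\varphi(y)-\varphi(x\cdot y)+\varphi(x)\cdot y$, $(d^2\varphi)(x,y,z)=x\cdot(\varphi(y,z)+\varphi(z,y))-\varphi(x\cdot y,z)+\varphi(x,y\cdot z+z\cdot y)-\varphi(x,y)\cdot z$, $(d^3\varphi)(x,y,z,w)=x\cdot\{\varphi(y,z,w)-\varphi(z,w,y)+\varphi(z,y,w)-\varphi(w,z,y)\}-\varphi(x\cdot y,z,w)+\varphi(x,y\cdot z+z\cdot y,w)-\varphi(x,y,z\cdot w+w\cdot z)+\varphi(x,y,z)\cdot w$. The deformation complex: $C^0_{\mathrm{Zinb}}(R,S)=0$, $d^0=0$, $C^n_{\mathrm{Zinb}}(f,f)=C^n_{\mathrm{Zinb}}(R,R)\times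 C^n_{\mathrm{Zinb}}(S,S)\times C^{n-1}_{\mathrm{Zinb}}(R,S)$ ($1\le n\le4$), $d^i_f(\xi;\pi;\varphi)=(d^i\xi;d^i\pi;f\xi-\pi f-d^{i-1}\varphi)$ with $(f\xi)(x_1,\dots)=f(\xi(x_1,\dots))$, $(\pi f)(x_1,\dots)=\pi(f(x_1),\dots)$. $H^3_{\mathrm{Zinb}}(f,f)=\ker d^3_f/\operatorname{im}d^2_f$; a $2$-cocycle is an element of $\ker d^2_f$. A deformation of $f$ is a formal power series $\Theta_t=\sum_{i\ge0}\theta_it^i$ with $\theta_0=(m_R;m_S;f)$ and $\theta_i=(m_{R,i};m_{S,i};f_i)\in C^2_{\mathrm{Zinb}}(f,f)$, such that for $*=R,S$ the bilinear map $M_{*,t}=\sum_i m_{*,i}t^i$ satisfies $M_{*,t}(M_{*,t}(x,y),z)=M_{*,t}(x,M_{*,t}(y,z))+M_{*,t}(x,M_{*,t}(z,y))$ for $x,y,z\in *$, and $F_t=\sum_if_it^i$ satisfies $F_t(M_{R,t}(x,y))=M_{S,t}(F_t(x),F_t(y))$ for $x,y\in R$. Its infinitesimal is $\theta_1$. *)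

theory Defs
  imports Complex_Main
begin

text \<open>Vector spaces over a field 'k are types of class ab_group_add equipped with a
  scalar multiplication satisfying the vector_space locale.  Cochains in
  Hom_K(R^{\<otimes>n}, A) are represented as n-linear maps.\<close>

definition zinbiel :: "('a::ab_group_add \<Rightarrow> 'a \<Rightarrow> 'a) \<Rightarrow> bool" where
  "zinbiel m \<longleftrightarrow> (\<forall>x y z. m (m x y) z = m x (m y z) + m x (m z y))"

definition zinb_alg :: "('k::field \<Rightarrow> 'a::ab_group_add \<Rightarrow> 'a) \<Rightarrow> ('a \<Rightarrow> 'a \<Rightarrow> 'a) \<Rightarrow> bool" where
  "zinb_alg s m \<longleftrightarrow> vector_space s \<and>
     (\<forall>x. Vector_Spaces.linear s s (m x)) \<and> (\<forall>y. Vector_Spaces.linear s s (\<lambda>x. m x y)) \<and>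
     zinbiel m"

definition zinb_morphism ::
  "('k::field \<Rightarrow> 'r::ab_group_add \<Rightarrow> 'r) \<Rightarrow> ('k \<Rightarrow> 's::ab_group_add \<Rightarrow> 's) \<Rightarrow>
   ('r \<Rightarrow> 'r \<Rightarrow> 'r) \<Rightarrow> ('s \<Rightarrow> 's \<Rightarrow> 's) \<Rightarrow> ('r \<Rightarrow> 's) \<Rightarrow> bool" where
  "zinb_morphism sR sS mR mS f \<longleftrightarrow> Vector_Spaces.linear sR sS f \<and> (\<forall>x y. f (mR x y) = mS (f x) (f y))"

definition C1 :: "('k::field \<Rightarrow> 'r::ab_group_add \<Rightarrow> 'r) \<Rightarrow> ('k \<Rightarrow> 'a::ab_group_add \<Rightarrow> 'a) \<Rightarrow> ('r \<Rightarrow> 'a) set" where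
  "C1 sR sA = {\<phi>. Vector_Spaces.linear sR sA \<phi>}"

definition C2 :: "('k::field \<Rightarrow> 'r::ab_group_add \<Rightarrow> 'r) \<Rightarrow> ('k \<Rightarrow> 'a::ab_group_add \<Rightarrow> 'a) \<Rightarrow> ('r \<Rightarrow> 'r \<Rightarrow> 'a) set" where
  "C2 sR sA = {\<phi>. (\<forall>y. Vector_Spaces.linear sR sA (\<lambda>x. \<phi> x y))
                 \<and> (\<forall>x. Vector_Spaces.linear sR sA (\<lambda>y. \<phi> x y))}"

definition C3 :: "('k::field \<Rightarrow> 'r::ab_group_add \<Rightarrow> 'r) \<Rightarrow> ('k \<Rightarrow> 'a::ab_group_add \<Rightarrow> 'a) \<Rightarrow> ('r \<Rightarrow> 'r \<Rightarrow> 'r \<Rightarrow> 'a) set" where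
  "C3 sR sA = {\<phi>. (\<forall>y z. Vector_Spaces.linear sR sA (\<lambda>x. \<phi> x y z))
                 \<and> (\<forall>x z. Vector_Spaces.linear sR sA (\<lambda>y. \<phi> x y z))
                 \<and> (\<forall>x y. Vector_Spaces.linear sR sA (\<lambda>z. \<phi> x y z))}"

text \<open>Coboundaries for a bimodule A over (R, mR) with left action lA and right action rA.\<close>

definition d1 :: "('r \<Rightarrow> 'r \<Rightarrow> 'r) \<Rightarrow> ('r \<Rightarrow> 'a \<Rightarrow> 'a) \<Rightarrow> ('a \<Rightarrow> 'r \<Rightarrow> 'a) \<Rightarrow>
    ('r \<Rightarrow> 'a::ab_group_add) \<Rightarrow> 'r \<Rightarrow> 'r \<Rightarrow> 'a" where
  "d1 mR lA rA \<phi> = (\<lambda>x y. lA x (\<phi> y) - \<phi> (mR x y) + rA (\<phi> x) y)"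

definition d2 :: "('r::ab_group_add \<Rightarrow> 'r \<Rightarrow> 'r) \<Rightarrow> ('r \<Rightarrow> 'a \<Rightarrow> 'a) \<Rightarrow> ('a \<Rightarrow> 'r \<Rightarrow> 'a) \<Rightarrow>
    ('r \<Rightarrow> 'r \<Rightarrow> 'a::ab_group_add) \<Rightarrow> 'r \<Rightarrow> 'r \<Rightarrow> 'r \<Rightarrow> 'a" where
  "d2 mR lA rA \<phi> = (\<lambda>x y z. lA x (\<phi> y z + \<phi> z y) - \<phi> (mR x y) z
        + \<phi> x (mR y z + mR z y) - rA (\<phi> x y) z)"

definition d3 :: "('r::ab_group_add \<Rightarrow> 'r \<Rightarrow> 'r) \<Rightarrow> ('r \<Rightarrow> 'a \<Rightarrow> 'a) \<Rightarrow> ('a \<Rightarrow> 'r \<Rightarrow> 'a) \<Rightarrow>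
    ('r \<Rightarrow> 'r \<Rightarrow> 'r \<Rightarrow> 'a::ab_group_add) \<Rightarrow> 'r \<Rightarrow> 'r \<Rightarrow> 'r \<Rightarrow> 'r \<Rightarrow> 'a" where
  "d3 mR lA rA \<phi> = (\<lambda>x y z w. lA x (\<phi> y z w - \<phi> z w y + \<phi> z y w - \<phi> w z y)
        - \<phi> (mR x y) z w + \<phi> x (mR y z + mR z y) w - \<phi> x y (mR z w + mR w z)
        + rA (\<phi> x y z) w)"

text \<open>Deformation complex C^n(f,f) = C^n(R,R) x C^n(S,S) x C^{n-1}(R,S) (n = 2,3)
  and the differentials d^2_f, d^3_f. R and S are bimodules over themselves; S is an
  R-bimodule via f.\<close>

definition Cf2 ::
  "('k::field \<Rightarrow> 'r::ab_group_add \<Rightarrow> 'r) \<Rightarrow> ('k \<Rightarrow> 's::ab_group_add \<Rightarrow> 's) \<Rightarrow>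
   (('r \<Rightarrow> 'r \<Rightarrow> 'r) \<times> ('s \<Rightarrow> 's \<Rightarrow> 's) \<times> ('r \<Rightarrow> 's)) set" where
  "Cf2 sR sS = C2 sR sR \<times> C2 sS sS \<times> C1 sR sS"

definition Cf3 ::
  "('k::field \<Rightarrow> 'r::ab_group_add \<Rightarrow> 'r) \<Rightarrow> ('k \<Rightarrow> 's::ab_group_add \<Rightarrow> 's) \<Rightarrow>
   (('r \<Rightarrow> 'r \<Rightarrow> 'r \<Rightarrow> 'r) \<times> ('s \<Rightarrow> 's \<Rightarrow> 's \<Rightarrow> 's) \<times> ('r \<Rightarrow> 'r \<Rightarrow> 's)) set" where
  "Cf3 sR sS = C3 sR sR \<times> C3 sS sS \<times> C2 sR sS"

definition df2 ::
  "('r::ab_group_add \<Rightarrow> 'r \<Rightarrow> 'r) \<Rightarrow> ('s::ab_group_add \<Rightarrow> 's \<Rightarrow> 's) \<Rightarrow> ('r \<Rightarrow> 's) \<Rightarrow>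
   ('r \<Rightarrow> 'r \<Rightarrow> 'r) \<times> ('s \<Rightarrow> 's \<Rightarrow> 's) \<times> ('r \<Rightarrow> 's) \<Rightarrow>
   ('r \<Rightarrow> 'r \<Rightarrow> 'r \<Rightarrow> 'r) \<times> ('s \<Rightarrow> 's \<Rightarrow> 's \<Rightarrow> 's) \<times> ('r \<Rightarrow> 'r \<Rightarrow> 's)" where
  "df2 mR mS f = (\<lambda>(\<xi>, \<pi>, \<phi>).
     (d2 mR mR mR \<xi>, d2 mS mS mS \<pi>,
      \<lambda>x y. f (\<xi> x y) - \<pi> (f x) (f y)
             - d1 mR (\<lambda>r s. mS (f r) s) (\<lambda>s r. mS s (f r)) \<phi> x y))"

definition df3 ::
  "('r::ab_group_add \<Rightarrow> 'r \<Rightarrow> 'r) \<Rightarrow> ('s::ab_group_add \<Rightarrow> 's \<Rightarrow> 's) \<Rightarrow> ('r \<Rightarrow> 's) \<Rightarrow>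
   ('r \<Rightarrow> 'r \<Rightarrow> 'r \<Rightarrow> 'r) \<times> ('s \<Rightarrow> 's \<Rightarrow> 's \<Rightarrow> 's) \<times> ('r \<Rightarrow> 'r \<Rightarrow> 's) \<Rightarrow>
   ('r \<Rightarrow> 'r \<Rightarrow> 'r \<Rightarrow> 'r \<Rightarrow> 'r) \<times> ('s \<Rightarrow> 's \<Rightarrow> 's \<Rightarrow> 's \<Rightarrow> 's) \<times> ('r \<Rightarrow> 'r \<Rightarrow> 'r \<Rightarrow> 's)" where
  "df3 mR mS f = (\<lambda>(\<xi>, \<pi>, \<phi>).
     (d3 mR mR mR \<xi>, d3 mS mS mS \<pi>,
      \<lambda>x y z. f (\<xi> x y z) - \<pi> (f x) (f y) (f z)
             - d2 mR (\<lambda>r s. mS (f r) s) (\<lambda>s r. mS s (f r)) \<phi> x y z))"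

definition H3_zero ::
  "('k::field \<Rightarrow> 'r::ab_group_add \<Rightarrow> 'r) \<Rightarrow> ('k \<Rightarrow> 's::ab_group_add \<Rightarrow> 's) \<Rightarrow>
   ('r \<Rightarrow> 'r \<Rightarrow> 'r) \<Rightarrow> ('s \<Rightarrow> 's \<Rightarrow> 's) \<Rightarrow> ('r \<Rightarrow> 's) \<Rightarrow> bool" where
  "H3_zero sR sS mR mS f \<longleftrightarrow>
     (\<forall>c \<in> Cf3 sR sS. df3 mR mS f c = (\<lambda>_ _ _ _. 0, \<lambda>_ _ _ _. 0, \<lambda>_ _ _. 0) \<longrightarrow> (\<exists>b \<in> Cf2 sR sS. df2 mR mS f b = c))"

text \<open>A deformation of f: sequences of coefficients of the formal power series
  M_{R,t}, M_{S,t}, F_t; the power-series identities are stated coefficientwise.\<close>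

definition is_deformation ::
  "('k::field \<Rightarrow> 'r::ab_group_add \<Rightarrow> 'r) \<Rightarrow> ('k \<Rightarrow> 's::ab_group_add \<Rightarrow> 's) \<Rightarrow>
   ('r \<Rightarrow> 'r \<Rightarrow> 'r) \<Rightarrow> ('s \<Rightarrow> 's \<Rightarrow> 's) \<Rightarrow> ('r \<Rightarrow> 's) \<Rightarrow>
   (nat \<Rightarrow> 'r \<Rightarrow> 'r \<Rightarrow> 'r) \<Rightarrow> (nat \<Rightarrow> 's \<Rightarrow> 's \<Rightarrow> 's) \<Rightarrow> (nat \<Rightarrow> 'r \<Rightarrow> 's) \<Rightarrow> bool" where
  "is_deformation sR sS mR mS f MR MS F \<longleftrightarrow>
     MR 0 = mR \<and> MS 0 = mS \<and> F 0 = f \<and>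
     (\<forall>i. (MR i, MS i, F i) \<in> Cf2 sR sS) \<and>
     (\<forall>n x y z. (\<Sum>i\<le>n. MR i (MR (n - i) x y) z)
                = (\<Sum>i\<le>n. MR i x (MR (n - i) y z) + MR i x (MR (n - i) z y))) \<and>
     (\<forall>n x y z. (\<Sum>i\<le>n. MS i (MS (n - i) x y) z)
                = (\<Sum>i\<le>n. MS i x (MS (n - i) y z) + MS i x (MS (n - i) z y))) \<and>
     (\<forall>n x y. (\<Sum>i\<le>n. F i (MR (n - i) x y))
               = (\<Sum>i\<le>n. \<Sum>j\<le>n - i. MS i (F j x) (F (n - i - j) y)))"

end

theory Submission
  imports Defs "HOL-Library.Function_Algebras" "HOL-Library.Product_Plus"
begin

(* The deformation is built order by order. Suppose theta_0, ..., theta_N satisfy the deformation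
   equations up to order N. Computed with theta_(N+1) = 0, the order N+1 part of the equations is
   a cochain c in C^3(f,f), and with an arbitrary theta_(N+1) it becomes c - d^2_f theta_(N+1).
   The cochain c is a cocycle: for any biadditive product m and additive map F, the Zinbiel
   associator of m is killed by d^3 and the morphism defect of F is related to the associators by
   d^2, identically. Applied to the products that M_t and F_t induce on formal power series, and
   read off at t^(N+1), where all lower coefficients vanish, this gives d^3_f c = 0. Since
   H^3(f,f) = 0, c = d^2_f theta for some theta, which is taken as theta_(N+1). The partial
   solutions agree on their common initial segments, so they glue to a deformation. *)

lemma sum_atMost_single:
  fixes n :: nat
  assumes "i \<le> n" "\<And>j. j \<le> n \<Longrightarrow> j \<noteq> i \<Longrightarrow> g j = 0"
  shows "(\<Sum>j\<le>n. g j) = g i"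
proof -
  have "(\<Sum>j\<le>n. g j) = (\<Sum>j\<in>{i}. g j)"
    by (rule sum.mono_neutral_right) (use assms in auto)
  then show ?thesis by simp
qed

lemma sum_atMost_update_ends:
  fixes n :: nat and g g' :: "nat \<Rightarrow> 'a::ab_group_add"
  assumes "0 < n" "\<And>i. 0 < i \<Longrightarrow> i < n \<Longrightarrow> g' i = g i"
  shows "(\<Sum>i\<le>n. g' i) = (\<Sum>i\<le>n. g i) + (g' 0 - g 0) + (g' n - g n)"
proof -
  obtain m where n: "n = Suc m" using assms(1) by (cases n) auto
  have "(\<Sum>i\<le>n. g' i) - (\<Sum>i\<le>n. g i) = (\<Sum>i\<le>m. g' i - g i) + (g' n - g n)"
    by (simp add: n sum_subtractf)
  also have "(\<Sum>i\<le>m. g' i - g i) = g' 0 - g 0"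
    by (rule sum_atMost_single) (use assms n in auto)
  finally show ?thesis by (simp add: algebra_simps)
qed

definition biadditive :: "('a::ab_group_add \<Rightarrow> 'b::ab_group_add \<Rightarrow> 'c::ab_group_add) \<Rightarrow> bool" where
  "biadditive m \<longleftrightarrow> (\<forall>b. additive (\<lambda>a. m a b)) \<and> (\<forall>a. additive (m a))"

lemma biadditive_simps:
  fixes m :: "'a::ab_group_add \<Rightarrow> 'b::ab_group_add \<Rightarrow> 'c::ab_group_add"
  assumes "biadditive m"
  shows "m (a + a') b = m a b + m a' b" "m a (b + b') = m a b + m a b'"
    "m (a - a') b = m a b - m a' b" "m a (b - b') = m a b - m a b'"
    "m (- a) b = - m a b" "m a (- b) = - m a b" "m 0 b = 0" "m a 0 = 0"
  using assms additive.add[of "\<lambda>a. m a b"] additive.add[of "m a"] additive.diff[of "\<lambda>a. m a b"]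
    additive.diff[of "m a"] additive.minus[of "\<lambda>a. m a b"] additive.minus[of "m a"]
    additive.zero[of "\<lambda>a. m a b"] additive.zero[of "m a"]
  unfolding biadditive_def by simp_all

lemma biadditive_zero [simp]: "biadditive (\<lambda>_ _. 0)"
  by (simp add: biadditive_def additive_def)

lemma C2_biadditive: "m \<in> C2 s1 s2 \<Longrightarrow> biadditive m"
  by (auto simp: C2_def biadditive_def additive_def Vector_Spaces.linear_iff)

lemma C2_scale:
  assumes "m \<in> C2 s1 s2"
  shows "m (s1 c a) b = s2 c (m a b)" "m a (s1 c b) = s2 c (m a b)"
  using assms by (auto simp: C2_def Vector_Spaces.linear_iff)

lemma C1_additive: "F \<in> C1 s1 s2 \<Longrightarrow> additive F"
  by (auto simp: C1_def additive_def Vector_Spaces.linear_iff)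

lemma C1_scale: "F \<in> C1 s1 s2 \<Longrightarrow> F (s1 c a) = s2 c (F a)"
  by (auto simp: C1_def Vector_Spaces.linear_iff)

lemma Cf2_components:
  assumes "\<theta> \<in> Cf2 sR sS"
  shows "biadditive (fst \<theta>)" "biadditive (fst (snd \<theta>))" "additive (snd (snd \<theta>))"
  using assms by (auto simp: Cf2_def C2_biadditive C1_additive)

lemma zero_Cf2:
  assumes sR: "vector_space sR" and sS: "vector_space sS"
  shows "0 \<in> Cf2 sR sS"
proof -
  interpret R: vector_space sR by (rule sR)
  interpret S: vector_space sS by (rule sS)
  show ?thesis
    by (simp add: Cf2_def C2_def C1_def zero_prod_def zero_fun_def Vector_Spaces.linear_iff sR sS)
qed

section \<open>The Zinbiel associator and the morphism defect\<close>

definition zinb_assoc :: "('a::ab_group_add \<Rightarrow> 'a \<Rightarrow> 'a) \<Rightarrow> 'a \<Rightarrow> 'a \<Rightarrow> 'a \<Rightarrow> 'a" where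
  "zinb_assoc m x y z = m (m x y) z - m x (m y z) - m x (m z y)"

definition hom_defect ::
    "('a::ab_group_add \<Rightarrow> 'a \<Rightarrow> 'a) \<Rightarrow> ('b::ab_group_add \<Rightarrow> 'b \<Rightarrow> 'b) \<Rightarrow> ('a \<Rightarrow> 'b) \<Rightarrow> 'a \<Rightarrow> 'a \<Rightarrow> 'b" where
  "hom_defect mR mS F x y = mS (F x) (F y) - F (mR x y)"

lemma zinbiel_iff_zinb_assoc: "zinbiel m \<longleftrightarrow> zinb_assoc m = (\<lambda>_ _ _. 0)"
  by (simp add: zinbiel_def zinb_assoc_def fun_eq_iff algebra_simps)

lemma d3_zinb_assoc:
  assumes "biadditive m"
  shows "d3 m m m (zinb_assoc m) x y z w = 0"
  unfolding d3_def zinb_assoc_def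
  by (simp only: biadditive_simps[OF assms]) (simp add: algebra_simps)

lemma d2_hom_defect:
  assumes "biadditive mR" "biadditive mS" "additive F"
  shows "d2 mR (\<lambda>r s. mS (F r) s) (\<lambda>s r. mS s (F r)) (hom_defect mR mS F) x y z
    = F (zinb_assoc mR x y z) - zinb_assoc mS (F x) (F y) (F z)"
  unfolding d2_def zinb_assoc_def hom_defect_def
  by (simp only: biadditive_simps[OF assms(1)] biadditive_simps[OF assms(2)]
      additive.add[OF assms(3)] additive.diff[OF assms(3)] additive.minus[OF assms(3)])
    (simp add: algebra_simps)

section \<open>Formal power series as sequences\<close>

(* A sequence u :: nat => 'a stands for the power series sum u_n t^n: seq_shift is multiplication
   by t, seq_delta x the constant series x, and series_apply2 M, series_apply F are the maps that
   M_t = sum M_i t^i and F_t = sum F_i t^i induce on power series. *)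

definition seq_delta :: "'a::zero \<Rightarrow> nat \<Rightarrow> 'a" where
  "seq_delta x = (\<lambda>n. if n = 0 then x else 0)"

definition seq_shift :: "(nat \<Rightarrow> 'a::zero) \<Rightarrow> nat \<Rightarrow> 'a" where
  "seq_shift u = (\<lambda>n. case n of 0 \<Rightarrow> 0 | Suc k \<Rightarrow> u k)"

definition series_apply2 ::
    "(nat \<Rightarrow> 'a \<Rightarrow> 'b \<Rightarrow> 'c::comm_monoid_add) \<Rightarrow> (nat \<Rightarrow> 'a) \<Rightarrow> (nat \<Rightarrow> 'b) \<Rightarrow> nat \<Rightarrow> 'c" where
  "series_apply2 M u v = (\<lambda>n. \<Sum>i\<le>n. \<Sum>j\<le>n - i. M i (u j) (v (n - i - j)))"

definition series_apply :: "(nat \<Rightarrow> 'a \<Rightarrow> 'b::comm_monoid_add) \<Rightarrow> (nat \<Rightarrow> 'a) \<Rightarrow> nat \<Rightarrow> 'b" where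
  "series_apply F u = (\<lambda>n. \<Sum>i\<le>n. F i (u (n - i)))"

lemma seq_delta_0 [simp]: "seq_delta x 0 = x"
  and seq_delta_Suc [simp]: "seq_delta x (Suc k) = 0"
  by (simp_all add: seq_delta_def)

lemma seq_shift_0 [simp]: "seq_shift u 0 = 0"
  and seq_shift_Suc [simp]: "seq_shift u (Suc k) = u k"
  by (simp_all add: seq_shift_def)

lemma additive_seq_shift: "additive (seq_shift :: (nat \<Rightarrow> 'a::ab_group_add) \<Rightarrow> _)"
  by standard (auto simp: seq_shift_def split: nat.splits)

lemma seq_delta_plus_shift: "u = seq_delta (u 0) + seq_shift (\<lambda>k. u (Suc k))"
  for u :: "nat \<Rightarrow> 'a::monoid_add"
  by (rule ext) (auto simp: seq_delta_def seq_shift_def split: nat.splits)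

lemma seq_shift_funpow_at: "(seq_shift ^^ n) u n = u 0"
  by (induction n arbitrary: u) simp_all

lemma seq_shift_funpow_drop:
  assumes "\<And>k. k < n \<Longrightarrow> a k = (0::'a::zero)"
  shows "(seq_shift ^^ n) (\<lambda>k. a (k + n)) = a"
  using assms
proof (induction n arbitrary: a)
  case (Suc n)
  have "(seq_shift ^^ n) (\<lambda>k. a (k + Suc n)) = (\<lambda>k. a (Suc k))"
    using Suc.IH[of "\<lambda>k. a (Suc k)"] Suc.prems by simp
  moreover have "seq_shift (\<lambda>k. a (Suc k)) = a"
    using Suc.prems by (auto simp: seq_shift_def split: nat.splits)
  ultimately show ?case by (simp add: funpow_swap1)
qed simp

lemma series_apply2_0 [simp]: "series_apply2 M u v 0 = M 0 (u 0) (v 0)"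
  by (simp add: series_apply2_def)

lemma series_apply_0 [simp]: "series_apply F u 0 = F 0 (u 0)"
  by (simp add: series_apply_def)

lemma series_apply2_shift_left:
  assumes "\<And>i. biadditive (M i)"
  shows "series_apply2 M (seq_shift u) v = seq_shift (series_apply2 M u v)"
proof (rule ext)
  fix n show "series_apply2 M (seq_shift u) v n = seq_shift (series_apply2 M u v) n"
  proof (cases n)
    case (Suc m)
    have "series_apply2 M (seq_shift u) v (Suc m)
        = (\<Sum>i\<le>m. \<Sum>j\<le>Suc m - i. M i (seq_shift u j) (v (Suc m - i - j)))"
      by (simp add: series_apply2_def biadditive_simps[OF assms])
    also have "\<dots> = (\<Sum>i\<le>m. \<Sum>j\<le>m - i. M i (u j) (v (m - i - j)))"
    proof (rule sum.cong[OF refl])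
      fix i assume "i \<in> {..m}"
      then have "Suc m - i = Suc (m - i)" by auto
      then show "(\<Sum>j\<le>Suc m - i. M i (seq_shift u j) (v (Suc m - i - j)))
          = (\<Sum>j\<le>m - i. M i (u j) (v (m - i - j)))"
        by (simp only: sum.atMost_Suc_shift) (simp add: biadditive_simps[OF assms])
    qed
    finally show ?thesis using Suc by (simp add: series_apply2_def)
  qed (simp add: biadditive_simps[OF assms])
qed

lemma series_apply2_shift_right:
  assumes "\<And>i. biadditive (M i)"
  shows "series_apply2 M u (seq_shift v) = seq_shift (series_apply2 M u v)"
proof (rule ext)
  fix n show "series_apply2 M u (seq_shift v) n = seq_shift (series_apply2 M u v) n"
  proof (cases n)
    case (Suc m)
    have "series_apply2 M u (seq_shift v) (Suc m)
        = (\<Sum>i\<le>m. \<Sum>j\<le>Suc m - i. M i (u j) (seq_shift v (Suc m - i - j)))"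
      by (simp add: series_apply2_def biadditive_simps[OF assms])
    also have "\<dots> = (\<Sum>i\<le>m. \<Sum>j\<le>m - i. M i (u j) (v (m - i - j)))"
    proof (rule sum.cong[OF refl])
      fix i assume "i \<in> {..m}"
      then have "Suc m - i = Suc (m - i)" by auto
      then have "(\<Sum>j\<le>Suc m - i. M i (u j) (seq_shift v (Suc m - i - j)))
          = (\<Sum>j\<le>m - i. M i (u j) (seq_shift v (Suc (m - i) - j)))"
        by (simp add: biadditive_simps[OF assms])
      also have "\<dots> = (\<Sum>j\<le>m - i. M i (u j) (v (m - i - j)))"
        by (rule sum.cong[OF refl]) (simp add: Suc_diff_le)
      finally show "(\<Sum>j\<le>Suc m - i. M i (u j) (seq_shift v (Suc m - i - j)))
          = (\<Sum>j\<le>m - i. M i (u j) (v (m - i - j)))" .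
    qed
    finally show ?thesis using Suc by (simp add: series_apply2_def)
  qed (simp add: biadditive_simps[OF assms])
qed

lemma series_apply_shift:
  assumes "\<And>i. additive (F i)"
  shows "series_apply F (seq_shift u) = seq_shift (series_apply F u)"
proof (rule ext)
  fix n show "series_apply F (seq_shift u) n = seq_shift (series_apply F u) n"
  proof (cases n)
    case (Suc m)
    have "series_apply F (seq_shift u) (Suc m) = (\<Sum>i\<le>m. F i (seq_shift u (Suc m - i)))"
      by (simp add: series_apply_def additive.zero[OF assms])
    also have "\<dots> = (\<Sum>i\<le>m. F i (u (m - i)))"
      by (rule sum.cong[OF refl]) (simp add: Suc_diff_le)
    finally show ?thesis using Suc by (simp add: series_apply_def)
  qed (simp add: additive.zero[OF assms])
qed

lemma biadditive_series_apply2: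
  assumes "\<And>i. biadditive (M i)"
  shows "biadditive (series_apply2 M)"
  using biadditive_simps(1,2)[OF assms]
  by (auto simp: biadditive_def additive_def series_apply2_def sum.distrib)

lemma additive_series_apply:
  assumes "\<And>i. additive (F i)"
  shows "additive (series_apply F)"
  by standard (auto simp: series_apply_def additive.add[OF assms] sum.distrib)

lemma series_apply2_delta_left:
  assumes "\<And>i. biadditive (M i)"
  shows "series_apply2 M (seq_delta x) v n = (\<Sum>i\<le>n. M i x (v (n - i)))"
  unfolding series_apply2_def
  by (rule sum.cong[OF refl], subst sum_atMost_single[of 0])
    (auto simp: seq_delta_def biadditive_simps[OF assms])

lemma series_apply2_delta_right:
  assumes "\<And>i. biadditive (M i)"
  shows "series_apply2 M u (seq_delta z) n = (\<Sum>i\<le>n. M i (u (n - i)) z)"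
  unfolding series_apply2_def
  by (rule sum.cong[OF refl], subst sum_atMost_single[of "n - _"])
    (auto simp: seq_delta_def biadditive_simps[OF assms])

lemma series_apply2_delta:
  assumes "\<And>i. biadditive (M i)"
  shows "series_apply2 M (seq_delta x) (seq_delta y) n = M n x y"
  unfolding series_apply2_delta_left[OF assms]
  by (subst sum_atMost_single[of n]) (auto simp: seq_delta_def biadditive_simps[OF assms])

lemma series_apply_delta:
  assumes "\<And>i. additive (F i)"
  shows "series_apply F (seq_delta x) n = F n x"
  unfolding series_apply_def
  by (subst sum_atMost_single[of n]) (auto simp: seq_delta_def additive.zero[OF assms])

section \<open>Low-order coefficients of shift-equivariant operators\<close>

definition shift_additive :: "((nat \<Rightarrow> 'a::ab_group_add) \<Rightarrow> nat \<Rightarrow> 'b::ab_group_add) \<Rightarrow> bool" where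
  "shift_additive \<Phi> \<longleftrightarrow> additive \<Phi> \<and> (\<forall>u. \<Phi> (seq_shift u) = seq_shift (\<Phi> u))"

lemma shift_additive_coeffs:
  assumes "shift_additive \<Phi>" and delta: "\<And>x k. k < n \<Longrightarrow> \<Phi> (seq_delta x) k = 0"
  shows "k < n \<Longrightarrow> \<Phi> u k = 0" and "\<Phi> u n = \<Phi> (seq_delta (u 0)) n"
proof -
  have split: "\<Phi> u = \<Phi> (seq_delta (u 0)) + seq_shift (\<Phi> (\<lambda>k. u (Suc k)))" for u
    using arg_cong[where f=\<Phi>, OF seq_delta_plus_shift[of u]] assms(1)
    by (simp add: shift_additive_def additive.add)
  show below: "\<Phi> u k = 0" if "k < n" for u k
    using that
  proof (induction k arbitrary: u)
    case (Suc k)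
    then show ?case by (subst split) (simp add: delta)
  qed (subst split, simp add: delta)
  show "\<Phi> u n = \<Phi> (seq_delta (u 0)) n"
    by (subst split, cases n) (simp_all add: below)
qed

lemma shift_additive2_coeffs:
  assumes "\<And>v. shift_additive (\<lambda>u. \<Phi> u v)" "\<And>u. shift_additive (\<Phi> u)"
    and delta: "\<And>x y k. k < n \<Longrightarrow> \<Phi> (seq_delta x) (seq_delta y) k = 0"
  shows "k < n \<Longrightarrow> \<Phi> u v k = 0"
    and "\<Phi> u v n = \<Phi> (seq_delta (u 0)) (seq_delta (v 0)) n"
proof -
  note right = shift_additive_coeffs[OF assms(2) delta]
  have "k < n \<Longrightarrow> \<Phi> (seq_delta x) v k = 0" for x k
    by (rule right(1))
  note left = shift_additive_coeffs[OF assms(1) this]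
  show "k < n \<Longrightarrow> \<Phi> u v k = 0" by (rule left(1))
  show "\<Phi> u v n = \<Phi> (seq_delta (u 0)) (seq_delta (v 0)) n"
    by (rule trans[OF left(2) right(2)])
qed

lemma shift_additive3_coeffs:
  assumes "\<And>v w. shift_additive (\<lambda>u. \<Phi> u v w)" "\<And>u w. shift_additive (\<lambda>v. \<Phi> u v w)"
    "\<And>u v. shift_additive (\<Phi> u v)"
    and delta: "\<And>x y z k. k < n \<Longrightarrow> \<Phi> (seq_delta x) (seq_delta y) (seq_delta z) k = 0"
  shows "k < n \<Longrightarrow> \<Phi> u v w k = 0"
    and "\<Phi> u v w n = \<Phi> (seq_delta (u 0)) (seq_delta (v 0)) (seq_delta (w 0)) n"
proof -
  note right = shift_additive2_coeffs[OF assms(2,3) delta]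
  have "k < n \<Longrightarrow> \<Phi> (seq_delta x) v w k = 0" for x v w k
    by (rule right(1))
  note left = shift_additive_coeffs[OF assms(1) this]
  show "k < n \<Longrightarrow> \<Phi> u v w k = 0" by (rule left(1))
  show "\<Phi> u v w n = \<Phi> (seq_delta (u 0)) (seq_delta (v 0)) (seq_delta (w 0)) n"
    by (rule trans[OF left(2) right(2)])
qed

lemma shift_equivariant_coeff_at_order:
  assumes "\<And>u. \<Phi> (seq_shift u) = seq_shift (\<Phi> u)" and "\<And>k. k < n \<Longrightarrow> a k = 0"
  shows "\<Phi> a n = \<Phi> (\<lambda>k. a (k + n)) 0"
proof -
  have commute: "\<Phi> ((seq_shift ^^ m) b) = (seq_shift ^^ m) (\<Phi> b)" for m b
    by (induction m) (simp_all add: assms(1))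
  have "\<Phi> a = \<Phi> ((seq_shift ^^ n) (\<lambda>k. a (k + n)))"
    using seq_shift_funpow_drop[of n a] assms(2) by simp
  also have "\<dots> = (seq_shift ^^ n) (\<Phi> (\<lambda>k. a (k + n)))"
    by (rule commute)
  finally show ?thesis
    by (simp add: seq_shift_funpow_at)
qed

lemma series_apply2_coeff_at_order:
  assumes "\<And>i. biadditive (M i)" and "\<And>k. k < n \<Longrightarrow> a k = 0"
  shows "series_apply2 M u a n = M 0 (u 0) (a n)" and "series_apply2 M a u n = M 0 (a n) (u 0)"
proof -
  show "series_apply2 M u a n = M 0 (u 0) (a n)"
    using shift_equivariant_coeff_at_order[where \<Phi>="series_apply2 M u",
        OF series_apply2_shift_right[OF assms(1)] assms(2)]
    by simp
  show "series_apply2 M a u n = M 0 (a n) (u 0)"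
    using shift_equivariant_coeff_at_order[where \<Phi>="\<lambda>a. series_apply2 M a u",
        OF series_apply2_shift_left[OF assms(1)] assms(2)]
    by simp
qed

lemma series_apply_coeff_at_order:
  assumes "\<And>i. additive (F i)" and "\<And>k. k < n \<Longrightarrow> a k = 0"
  shows "series_apply F a n = F 0 (a n)"
  using shift_equivariant_coeff_at_order[where \<Phi>="series_apply F",
      OF series_apply_shift[OF assms(1)] assms(2)]
  by simp

lemma shift_additive_zinb_assoc_series:
  assumes "\<And>i. biadditive (M i)"
  shows "shift_additive (\<lambda>u. zinb_assoc (series_apply2 M) u v w)"
    "shift_additive (\<lambda>v. zinb_assoc (series_apply2 M) u v w)"
    "shift_additive (zinb_assoc (series_apply2 M) u v)"
  using biadditive_simps[OF biadditive_series_apply2[OF assms]]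
  by (auto simp: shift_additive_def additive_def zinb_assoc_def
      series_apply2_shift_left[OF assms] series_apply2_shift_right[OF assms]
      additive.add[OF additive_seq_shift] additive.diff[OF additive_seq_shift] algebra_simps)

lemma shift_additive_hom_defect_series:
  assumes "\<And>i. biadditive (MR i)" "\<And>i. biadditive (MS i)" "\<And>i. additive (F i)"
  shows "shift_additive (\<lambda>u. hom_defect (series_apply2 MR) (series_apply2 MS) (series_apply F) u v)"
    "shift_additive (hom_defect (series_apply2 MR) (series_apply2 MS) (series_apply F) u)"
  using biadditive_simps[OF biadditive_series_apply2[OF assms(1)]]
    biadditive_simps[OF biadditive_series_apply2[OF assms(2)]]
    additive.add[OF additive_series_apply[OF assms(3)]]
  by (auto simp: shift_additive_def additive_def hom_defect_def
      series_apply2_shift_left[OF assms(1)] series_apply2_shift_right[OF assms(1)]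
      series_apply2_shift_left[OF assms(2)] series_apply2_shift_right[OF assms(2)]
      series_apply_shift[OF assms(3)]
      additive.add[OF additive_seq_shift] additive.diff[OF additive_seq_shift] algebra_simps)

lemma d3_series_coeff:
  assumes M: "\<And>i. biadditive (M i)"
    and \<Phi>: "\<And>v w. shift_additive (\<lambda>u. \<Phi> u v w)" "\<And>u w. shift_additive (\<lambda>v. \<Phi> u v w)"
      "\<And>u v. shift_additive (\<Phi> u v)"
    and vanish: "\<And>x y z k. k < n \<Longrightarrow> \<Phi> (seq_delta x) (seq_delta y) (seq_delta z) k = 0"
  shows "d3 (series_apply2 M) (series_apply2 M) (series_apply2 M) \<Phi>
      (seq_delta x) (seq_delta y) (seq_delta z) (seq_delta w) n
    = d3 (M 0) (M 0) (M 0) (\<lambda>x y z. \<Phi> (seq_delta x) (seq_delta y) (seq_delta z) n) x y z w"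
proof -
  let ?m = "series_apply2 M" and ?\<delta> = seq_delta
  note coeffs = shift_additive3_coeffs[where n=n, OF \<Phi> vanish]
  define a where "a = \<Phi> (?\<delta> y) (?\<delta> z) (?\<delta> w) - \<Phi> (?\<delta> z) (?\<delta> w) (?\<delta> y)
    + \<Phi> (?\<delta> z) (?\<delta> y) (?\<delta> w) - \<Phi> (?\<delta> w) (?\<delta> z) (?\<delta> y)"
  (* The coefficients of \<Phi> below n vanish, so in each product only the constant term of the
     other factor contributes to the coefficient of t^n. *)
  have "k < n \<Longrightarrow> a k = 0" for k
    by (simp add: a_def coeffs(1))
  then have left: "?m (?\<delta> x) a n = M 0 x (a n)"
    using series_apply2_coeff_at_order(1)[OF M] by simp
  have right: "?m (\<Phi> (?\<delta> x) (?\<delta> y) (?\<delta> z)) (?\<delta> w) n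
      = M 0 (\<Phi> (?\<delta> x) (?\<delta> y) (?\<delta> z) n) w"
    using series_apply2_coeff_at_order(2)[OF M coeffs(1)] by simp
  have inner: "\<Phi> (?m (?\<delta> x) (?\<delta> y)) (?\<delta> z) (?\<delta> w) n = \<Phi> (?\<delta> (M 0 x y)) (?\<delta> z) (?\<delta> w) n"
    "\<Phi> (?\<delta> x) (?m (?\<delta> y) (?\<delta> z) + ?m (?\<delta> z) (?\<delta> y)) (?\<delta> w) n
      = \<Phi> (?\<delta> x) (?\<delta> (M 0 y z + M 0 z y)) (?\<delta> w) n"
    "\<Phi> (?\<delta> x) (?\<delta> y) (?m (?\<delta> z) (?\<delta> w) + ?m (?\<delta> w) (?\<delta> z)) n
      = \<Phi> (?\<delta> x) (?\<delta> y) (?\<delta> (M 0 z w + M 0 w z)) n"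
    using coeffs(2)[where u="?m (?\<delta> x) (?\<delta> y)" and v="?\<delta> z" and w="?\<delta> w"]
      coeffs(2)[where u="?\<delta> x" and v="?m (?\<delta> y) (?\<delta> z) + ?m (?\<delta> z) (?\<delta> y)" and w="?\<delta> w"]
      coeffs(2)[where u="?\<delta> x" and v="?\<delta> y" and w="?m (?\<delta> z) (?\<delta> w) + ?m (?\<delta> w) (?\<delta> z)"]
    by (simp_all add: plus_fun_def)
  have "d3 ?m ?m ?m \<Phi> (?\<delta> x) (?\<delta> y) (?\<delta> z) (?\<delta> w) n
      = ?m (?\<delta> x) a n - \<Phi> (?m (?\<delta> x) (?\<delta> y)) (?\<delta> z) (?\<delta> w) n
        + \<Phi> (?\<delta> x) (?m (?\<delta> y) (?\<delta> z) + ?m (?\<delta> z) (?\<delta> y)) (?\<delta> w) n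
        - \<Phi> (?\<delta> x) (?\<delta> y) (?m (?\<delta> z) (?\<delta> w) + ?m (?\<delta> w) (?\<delta> z)) n
        + ?m (\<Phi> (?\<delta> x) (?\<delta> y) (?\<delta> z)) (?\<delta> w) n"
    by (simp add: d3_def a_def)
  also have "\<dots> = d3 (M 0) (M 0) (M 0) (\<lambda>x y z. \<Phi> (?\<delta> x) (?\<delta> y) (?\<delta> z) n) x y z w"
    unfolding left right inner by (simp add: d3_def a_def)
  finally show ?thesis .
qed

lemma d2_series_coeff:
  assumes MS: "\<And>i. biadditive (MS i)"
    and \<Psi>: "\<And>v. shift_additive (\<lambda>u. \<Psi> u v)" "\<And>u. shift_additive (\<Psi> u)"
    and vanish: "\<And>x y k. k < n \<Longrightarrow> \<Psi> (seq_delta x) (seq_delta y) k = 0"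
  shows "d2 (series_apply2 MR) (\<lambda>r s. series_apply2 MS (series_apply F r) s)
      (\<lambda>s r. series_apply2 MS s (series_apply F r)) \<Psi> (seq_delta x) (seq_delta y) (seq_delta z) n
    = d2 (MR 0) (\<lambda>r s. MS 0 (F 0 r) s) (\<lambda>s r. MS 0 s (F 0 r))
      (\<lambda>x y. \<Psi> (seq_delta x) (seq_delta y) n) x y z"
proof -
  let ?mR = "series_apply2 MR" and ?mS = "series_apply2 MS" and ?F = "series_apply F"
    and ?\<delta> = seq_delta
  note coeffs = shift_additive2_coeffs[where n=n, OF \<Psi> vanish]
  define a where "a = \<Psi> (?\<delta> y) (?\<delta> z) + \<Psi> (?\<delta> z) (?\<delta> y)"
  have "k < n \<Longrightarrow> a k = 0" for k
    by (simp add: a_def coeffs(1))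
  then have left: "?mS (?F (?\<delta> x)) a n = MS 0 (F 0 x) (a n)"
    using series_apply2_coeff_at_order(1)[OF MS] by simp
  have right: "?mS (\<Psi> (?\<delta> x) (?\<delta> y)) (?F (?\<delta> z)) n = MS 0 (\<Psi> (?\<delta> x) (?\<delta> y) n) (F 0 z)"
    using series_apply2_coeff_at_order(2)[OF MS coeffs(1)] by simp
  have inner: "\<Psi> (?mR (?\<delta> x) (?\<delta> y)) (?\<delta> z) n = \<Psi> (?\<delta> (MR 0 x y)) (?\<delta> z) n"
    "\<Psi> (?\<delta> x) (?mR (?\<delta> y) (?\<delta> z) + ?mR (?\<delta> z) (?\<delta> y)) n
      = \<Psi> (?\<delta> x) (?\<delta> (MR 0 y z + MR 0 z y)) n"
    using coeffs(2)[where u="?mR (?\<delta> x) (?\<delta> y)" and v="?\<delta> z"]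
      coeffs(2)[where u="?\<delta> x" and v="?mR (?\<delta> y) (?\<delta> z) + ?mR (?\<delta> z) (?\<delta> y)"]
    by (simp_all add: plus_fun_def)
  have "d2 ?mR (\<lambda>r s. ?mS (?F r) s) (\<lambda>s r. ?mS s (?F r)) \<Psi> (?\<delta> x) (?\<delta> y) (?\<delta> z) n
      = ?mS (?F (?\<delta> x)) a n - \<Psi> (?mR (?\<delta> x) (?\<delta> y)) (?\<delta> z) n
        + \<Psi> (?\<delta> x) (?mR (?\<delta> y) (?\<delta> z) + ?mR (?\<delta> z) (?\<delta> y)) n
        - ?mS (\<Psi> (?\<delta> x) (?\<delta> y)) (?F (?\<delta> z)) n"
    by (simp add: d2_def a_def)
  also have "\<dots> = d2 (MR 0) (\<lambda>r s. MS 0 (F 0 r) s) (\<lambda>s r. MS 0 s (F 0 r))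
      (\<lambda>x y. \<Psi> (?\<delta> x) (?\<delta> y) n) x y z"
    unfolding left right inner by (simp add: d2_def a_def)
  finally show ?thesis .
qed

section \<open>Obstructions\<close>

definition zinb_obstruction :: "(nat \<Rightarrow> 'a::ab_group_add \<Rightarrow> 'a \<Rightarrow> 'a) \<Rightarrow> nat \<Rightarrow> 'a \<Rightarrow> 'a \<Rightarrow> 'a \<Rightarrow> 'a" where
  "zinb_obstruction M n x y z = (\<Sum>i\<le>n. M i (M (n - i) x y) z)
      - (\<Sum>i\<le>n. M i x (M (n - i) y z) + M i x (M (n - i) z y))"

definition hom_obstruction :: "(nat \<Rightarrow> 'a::ab_group_add \<Rightarrow> 'a \<Rightarrow> 'a) \<Rightarrow> (nat \<Rightarrow> 'b::ab_group_add \<Rightarrow> 'b \<Rightarrow> 'b)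
    \<Rightarrow> (nat \<Rightarrow> 'a \<Rightarrow> 'b) \<Rightarrow> nat \<Rightarrow> 'a \<Rightarrow> 'a \<Rightarrow> 'b" where
  "hom_obstruction MR MS F n x y = (\<Sum>i\<le>n. \<Sum>j\<le>n - i. MS i (F j x) (F (n - i - j) y))
      - (\<Sum>i\<le>n. F i (MR (n - i) x y))"

lemma zinb_obstruction_series:
  assumes "\<And>i. biadditive (M i)"
  shows "zinb_obstruction M n x y z
    = zinb_assoc (series_apply2 M) (seq_delta x) (seq_delta y) (seq_delta z) n"
proof -
  have "series_apply2 M (series_apply2 M (seq_delta x) (seq_delta y)) (seq_delta z) n
      = (\<Sum>i\<le>n. M i (M (n - i) x y) z)"
    by (simp only: series_apply2_delta_right[OF assms, where u="series_apply2 M _ _"]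
        series_apply2_delta[OF assms])
  moreover have "series_apply2 M (seq_delta x) (series_apply2 M (seq_delta y) (seq_delta z)) n
      = (\<Sum>i\<le>n. M i x (M (n - i) y z))" for y z
    by (simp only: series_apply2_delta_left[OF assms, where v="series_apply2 M _ _"]
        series_apply2_delta[OF assms])
  ultimately show ?thesis
    by (simp add: zinb_obstruction_def zinb_assoc_def sum.distrib)
qed

lemma hom_obstruction_series:
  assumes "\<And>i. biadditive (MR i)" "\<And>i. additive (F i)"
  shows "hom_obstruction MR MS F n x y
    = hom_defect (series_apply2 MR) (series_apply2 MS) (series_apply F) (seq_delta x) (seq_delta y) n"
proof -
  have "series_apply2 MS (series_apply F (seq_delta x)) (series_apply F (seq_delta y)) n
      = (\<Sum>i\<le>n. \<Sum>j\<le>n - i. MS i (F j x) (F (n - i - j) y))"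
    by (simp only: series_apply2_def series_apply_delta[OF assms(2)])
  moreover have "series_apply F (series_apply2 MR (seq_delta x) (seq_delta y)) n
      = (\<Sum>i\<le>n. F i (MR (n - i) x y))"
    by (simp only: series_apply_def series_apply2_delta[OF assms(1)])
  ultimately show ?thesis
    by (simp add: hom_obstruction_def hom_defect_def)
qed

lemma d3_zinb_obstruction:
  assumes M: "\<And>i. biadditive (M i)"
    and lower: "\<And>k x y z. k < n \<Longrightarrow> zinb_obstruction M k x y z = 0"
  shows "d3 (M 0) (M 0) (M 0) (zinb_obstruction M n) x y z w = 0"
proof -
  let ?m = "series_apply2 M" and ?\<delta> = seq_delta
  have m: "biadditive ?m" by (rule biadditive_series_apply2[OF M])
  note assoc_shift = shift_additive_zinb_assoc_series[OF M]
  have vanish: "zinb_assoc ?m (?\<delta> x) (?\<delta> y) (?\<delta> z) k = 0" if "k < n" for x y z k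
    using lower[OF that] by (simp only: zinb_obstruction_series[OF M])
  have "zinb_obstruction M n = (\<lambda>x y z. zinb_assoc ?m (?\<delta> x) (?\<delta> y) (?\<delta> z) n)"
    by (simp add: fun_eq_iff zinb_obstruction_series[OF M])
  then have "d3 (M 0) (M 0) (M 0) (zinb_obstruction M n) x y z w
      = d3 ?m ?m ?m (zinb_assoc ?m) (?\<delta> x) (?\<delta> y) (?\<delta> z) (?\<delta> w) n"
    using d3_series_coeff[where M=M and \<Phi>="zinb_assoc ?m", OF M assoc_shift vanish] by simp
  also have "\<dots> = 0"
    by (simp add: d3_zinb_assoc[OF m])
  finally show ?thesis .
qed

lemma d2_hom_obstruction:
  assumes MR: "\<And>i. biadditive (MR i)" and MS: "\<And>i. biadditive (MS i)" and F: "\<And>i. additive (F i)"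
    and lowerR: "\<And>k x y z. k < n \<Longrightarrow> zinb_obstruction MR k x y z = 0"
    and lowerS: "\<And>k x y z. k < n \<Longrightarrow> zinb_obstruction MS k x y z = 0"
    and lowerF: "\<And>k x y. k < n \<Longrightarrow> hom_obstruction MR MS F k x y = 0"
  shows "d2 (MR 0) (\<lambda>r s. MS 0 (F 0 r) s) (\<lambda>s r. MS 0 s (F 0 r)) (hom_obstruction MR MS F n) x y z
    = F 0 (zinb_obstruction MR n x y z) - zinb_obstruction MS n (F 0 x) (F 0 y) (F 0 z)"
proof -
  let ?mR = "series_apply2 MR" and ?mS = "series_apply2 MS" and ?F = "series_apply F"
    and ?\<delta> = seq_delta
  have mR: "biadditive ?mR" and mS: "biadditive ?mS" and F': "additive ?F"
    by (rule biadditive_series_apply2[where M=MR, OF MR] biadditive_series_apply2[where M=MS, OF MS]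
        additive_series_apply[where F=F, OF F])+
  note assocR_shift = shift_additive_zinb_assoc_series[where M=MR, OF MR]
  note assocS_shift = shift_additive_zinb_assoc_series[where M=MS, OF MS]
  note defect_shift = shift_additive_hom_defect_series[where MR=MR and MS=MS and F=F, OF MR MS F]
  have vanishR: "zinb_assoc ?mR (?\<delta> x) (?\<delta> y) (?\<delta> z) k = 0" if "k < n" for x y z k
    using lowerR[OF that] by (simp only: zinb_obstruction_series[where M=MR, OF MR])
  have vanishS: "zinb_assoc ?mS (?\<delta> x) (?\<delta> y) (?\<delta> z) k = 0" if "k < n" for x y z k
    using lowerS[OF that] by (simp only: zinb_obstruction_series[where M=MS, OF MS])
  have vanishF: "hom_defect ?mR ?mS ?F (?\<delta> x) (?\<delta> y) k = 0" if "k < n" for x y k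
    using lowerF[OF that] by (simp only: hom_obstruction_series[where MR=MR and F=F, OF MR F])
  note coeffsR = shift_additive3_coeffs[where n=n, OF assocR_shift vanishR]
  note coeffsS = shift_additive3_coeffs[where n=n, OF assocS_shift vanishS]
  have "hom_obstruction MR MS F n = (\<lambda>x y. hom_defect ?mR ?mS ?F (?\<delta> x) (?\<delta> y) n)"
    by (simp add: fun_eq_iff hom_obstruction_series[where MR=MR and F=F, OF MR F])
  then have "d2 (MR 0) (\<lambda>r s. MS 0 (F 0 r) s) (\<lambda>s r. MS 0 s (F 0 r)) (hom_obstruction MR MS F n) x y z
      = d2 ?mR (\<lambda>r s. ?mS (?F r) s) (\<lambda>s r. ?mS s (?F r)) (hom_defect ?mR ?mS ?F)
          (?\<delta> x) (?\<delta> y) (?\<delta> z) n"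
    using d2_series_coeff[where \<Psi>="hom_defect ?mR ?mS ?F", OF MS defect_shift vanishF]
    by simp
  also have "\<dots> = ?F (zinb_assoc ?mR (?\<delta> x) (?\<delta> y) (?\<delta> z)) n
      - zinb_assoc ?mS (?F (?\<delta> x)) (?F (?\<delta> y)) (?F (?\<delta> z)) n"
    by (simp add: d2_hom_defect[OF mR mS F'])
  also have "?F (zinb_assoc ?mR (?\<delta> x) (?\<delta> y) (?\<delta> z)) n
      = F 0 (zinb_assoc ?mR (?\<delta> x) (?\<delta> y) (?\<delta> z) n)"
    by (rule series_apply_coeff_at_order[where F=F, OF F coeffsR(1)])
  also have "zinb_assoc ?mS (?F (?\<delta> x)) (?F (?\<delta> y)) (?F (?\<delta> z)) n
      = zinb_assoc ?mS (?\<delta> (F 0 x)) (?\<delta> (F 0 y)) (?\<delta> (F 0 z)) n"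
    by (simp add: coeffsS(2)[where u="?F (?\<delta> x)" and v="?F (?\<delta> y)" and w="?F (?\<delta> z)"])
  finally show ?thesis
    by (simp only: zinb_obstruction_series[where M=MR, OF MR] zinb_obstruction_series[where M=MS, OF MS])
qed

lemma zinb_obstruction_update:
  assumes M: "\<And>i. biadditive (M i)" and "biadditive \<xi>" and Mn: "M n = (\<lambda>_ _. 0)" and n: "0 < n"
  shows "zinb_obstruction (M(n := \<xi>)) n x y z
    = zinb_obstruction M n x y z - d2 (M 0) (M 0) (M 0) \<xi> x y z"
proof -
  note simps = biadditive_simps[OF M] biadditive_simps[OF assms(2)]
  have "(\<Sum>i\<le>n. (M(n := \<xi>)) i ((M(n := \<xi>)) (n - i) x y) z)
      = (\<Sum>i\<le>n. M i (M (n - i) x y) z) + M 0 (\<xi> x y) z + \<xi> (M 0 x y) z"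
    by (subst sum_atMost_update_ends[OF n, where g="\<lambda>i. M i (M (n - i) x y) z"])
      (use n in \<open>auto simp: Mn simps\<close>)
  moreover have "(\<Sum>i\<le>n. (M(n := \<xi>)) i x ((M(n := \<xi>)) (n - i) y z)
        + (M(n := \<xi>)) i x ((M(n := \<xi>)) (n - i) z y))
      = (\<Sum>i\<le>n. M i x (M (n - i) y z) + M i x (M (n - i) z y))
        + (M 0 x (\<xi> y z) + M 0 x (\<xi> z y)) + (\<xi> x (M 0 y z) + \<xi> x (M 0 z y))"
    by (subst sum_atMost_update_ends[OF n,
          where g="\<lambda>i. M i x (M (n - i) y z) + M i x (M (n - i) z y)"])
      (use n in \<open>auto simp: Mn simps\<close>)
  ultimately show ?thesis
    unfolding zinb_obstruction_def d2_def by (simp add: simps algebra_simps)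
qed

lemma hom_obstruction_update:
  assumes MS: "\<And>i. biadditive (MS i)" and F: "\<And>i. additive (F i)"
    and MRn: "MR n = (\<lambda>_ _. 0)" and MSn: "MS n = (\<lambda>_ _. 0)" and Fn: "F n = (\<lambda>_. 0)"
    and n: "0 < n"
  shows "hom_obstruction (MR(n := \<xi>)) (MS(n := \<pi>)) (F(n := \<phi>)) n x y
    = hom_obstruction MR MS F n x y
      - (F 0 (\<xi> x y) - \<pi> (F 0 x) (F 0 y)
         - d1 (MR 0) (\<lambda>r s. MS 0 (F 0 r) s) (\<lambda>s r. MS 0 s (F 0 r)) \<phi> x y)"
proof -
  have map: "(\<Sum>i\<le>n. (F(n := \<phi>)) i ((MR(n := \<xi>)) (n - i) x y))
      = (\<Sum>i\<le>n. F i (MR (n - i) x y)) + F 0 (\<xi> x y) + \<phi> (MR 0 x y)"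
    by (subst sum_atMost_update_ends[OF n, where g="\<lambda>i. F i (MR (n - i) x y)"])
      (use n in \<open>auto simp: MRn Fn additive.zero[OF F]\<close>)
  have inner: "(\<Sum>j\<le>n. MS 0 ((F(n := \<phi>)) j x) ((F(n := \<phi>)) (n - j) y))
      = (\<Sum>j\<le>n. MS 0 (F j x) (F (n - j) y)) + MS 0 (F 0 x) (\<phi> y) + MS 0 (\<phi> x) (F 0 y)"
    by (subst sum_atMost_update_ends[OF n, where g="\<lambda>j. MS 0 (F j x) (F (n - j) y)"])
      (use n in \<open>auto simp: Fn biadditive_simps[OF MS]\<close>)
  have "(\<Sum>i\<le>n. \<Sum>j\<le>n - i. (MS(n := \<pi>)) i ((F(n := \<phi>)) j x) ((F(n := \<phi>)) (n - i - j) y))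
      = (\<Sum>i\<le>n. \<Sum>j\<le>n - i. MS i (F j x) (F (n - i - j) y))
        + (MS 0 (F 0 x) (\<phi> y) + MS 0 (\<phi> x) (F 0 y)) + \<pi> (F 0 x) (F 0 y)"
    by (subst sum_atMost_update_ends[OF n,
          where g="\<lambda>i. \<Sum>j\<le>n - i. MS i (F j x) (F (n - i - j) y)"])
      (use n inner in \<open>auto simp: MSn intro!: sum.cong\<close>)
  with map show ?thesis
    unfolding hom_obstruction_def d1_def by (simp add: algebra_simps)
qed

lemma zinb_obstruction_C3:
  assumes s: "vector_space s" and M: "\<And>i. M i \<in> C2 s s"
  shows "zinb_obstruction M n \<in> C3 s s"
proof -
  interpret vector_space s by (rule s)
  show ?thesis
    unfolding C3_def Vector_Spaces.linear_iff
    by (auto simp: s zinb_obstruction_def biadditive_simps[OF C2_biadditive[OF M]] C2_scale[OF M]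
        scale_sum_right sum.distrib algebra_simps)
qed

lemma hom_obstruction_C2:
  assumes sR: "vector_space sR" and sS: "vector_space sS"
    and MR: "\<And>i. MR i \<in> C2 sR sR" and MS: "\<And>i. MS i \<in> C2 sS sS" and F: "\<And>i. F i \<in> C1 sR sS"
  shows "hom_obstruction MR MS F n \<in> C2 sR sS"
proof -
  interpret S: vector_space sS by (rule sS)
  show ?thesis
    unfolding C2_def Vector_Spaces.linear_iff
    by (auto simp: sR sS hom_obstruction_def biadditive_simps[OF C2_biadditive[OF MR]]
        biadditive_simps[OF C2_biadditive[OF MS]] additive.add[OF C1_additive[OF F]]
        additive.diff[OF C1_additive[OF F]] C2_scale[OF MR] C2_scale[OF MS] C1_scale[OF F]
        S.scale_sum_right sum.distrib algebra_simps)
qed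

definition deformation_obstruction ::
    "(nat \<Rightarrow> ('r::ab_group_add \<Rightarrow> 'r \<Rightarrow> 'r) \<times> ('s::ab_group_add \<Rightarrow> 's \<Rightarrow> 's) \<times> ('r \<Rightarrow> 's)) \<Rightarrow> nat
     \<Rightarrow> ('r \<Rightarrow> 'r \<Rightarrow> 'r \<Rightarrow> 'r) \<times> ('s \<Rightarrow> 's \<Rightarrow> 's \<Rightarrow> 's) \<times> ('r \<Rightarrow> 'r \<Rightarrow> 's)" where
  "deformation_obstruction \<Theta> n =
     (zinb_obstruction (\<lambda>i. fst (\<Theta> i)) n, zinb_obstruction (\<lambda>i. fst (snd (\<Theta> i))) n,
      hom_obstruction (\<lambda>i. fst (\<Theta> i)) (\<lambda>i. fst (snd (\<Theta> i))) (\<lambda>i. snd (snd (\<Theta> i))) n)"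

lemma deformation_obstruction_cong:
  assumes "\<And>i. i \<le> n \<Longrightarrow> \<Theta>' i = \<Theta> i"
  shows "deformation_obstruction \<Theta>' n = deformation_obstruction \<Theta> n"
  using assms
  by (auto simp: deformation_obstruction_def zinb_obstruction_def hom_obstruction_def fun_eq_iff
      intro!: sum.cong arg_cong2[where f="(-)"])

lemma deformation_obstruction_0:
  "\<Theta> 0 = (mR, mS, f) \<Longrightarrow>
    deformation_obstruction \<Theta> 0 = (zinb_assoc mR, zinb_assoc mS, hom_defect mR mS f)"
  by (simp add: deformation_obstruction_def zinb_obstruction_def zinb_assoc_def
      hom_obstruction_def hom_defect_def fun_eq_iff)

lemma deformation_obstruction_1:
  assumes "\<Theta> 0 = (mR, mS, f)" "\<Theta> 1 = \<theta>"
    and "biadditive mR" "biadditive mS" "biadditive (fst \<theta>)" "biadditive (fst (snd \<theta>))"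
  shows "deformation_obstruction \<Theta> 1 = - df2 mR mS f \<theta>"
proof -
  obtain \<xi> \<pi> \<phi> where \<theta>: "\<theta> = (\<xi>, \<pi>, \<phi>)" by (cases \<theta>)
  have "{..1::nat} = {0, 1}" by auto
  then show ?thesis
    using assms
    by (simp add: \<theta> deformation_obstruction_def zinb_obstruction_def hom_obstruction_def df2_def
        d2_def d1_def biadditive_simps fun_eq_iff algebra_simps)
qed

lemma deformation_obstruction_Cf3:
  assumes "vector_space sR" "vector_space sS" "\<And>i. \<Theta> i \<in> Cf2 sR sS"
  shows "deformation_obstruction \<Theta> n \<in> Cf3 sR sS"
  using assms
  by (simp add: deformation_obstruction_def Cf3_def Cf2_def zinb_obstruction_C3 hom_obstruction_C2
      mem_Times_iff)

lemma df3_deformation_obstruction: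
  assumes \<Theta>0: "\<Theta> 0 = (mR, mS, f)" and \<Theta>: "\<And>i. \<Theta> i \<in> Cf2 sR sS"
    and lower: "\<And>k. k < n \<Longrightarrow> deformation_obstruction \<Theta> k = 0"
  shows "df3 mR mS f (deformation_obstruction \<Theta> n) = 0"
proof -
  define MR where "MR = (\<lambda>i. fst (\<Theta> i))"
  define MS where "MS = (\<lambda>i. fst (snd (\<Theta> i)))"
  define F where "F = (\<lambda>i. snd (snd (\<Theta> i)))"
  have MR: "\<And>i. biadditive (MR i)" and MS: "\<And>i. biadditive (MS i)" and F: "\<And>i. additive (F i)"
    using Cf2_components[OF \<Theta>] by (simp_all add: MR_def MS_def F_def)
  have base: "MR 0 = mR" "MS 0 = mS" "F 0 = f"
    by (simp_all add: MR_def MS_def F_def \<Theta>0)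
  have obstruction: "deformation_obstruction \<Theta> k
      = (zinb_obstruction MR k, zinb_obstruction MS k, hom_obstruction MR MS F k)" for k
    by (simp add: deformation_obstruction_def MR_def MS_def F_def)
  have lowerR: "zinb_obstruction MR k x y z = 0" and lowerS: "zinb_obstruction MS k u v w = 0"
    and lowerF: "hom_obstruction MR MS F k x y = 0" if "k < n" for k x y z u v w
    using lower[OF that] by (simp_all add: obstruction zero_prod_def zero_fun_def)
  show ?thesis
    using d3_zinb_obstruction[where M=MR, OF MR lowerR] d3_zinb_obstruction[where M=MS, OF MS lowerS]
      d2_hom_obstruction[where MR=MR and MS=MS and F=F, OF MR MS F lowerR lowerS lowerF]
    by (simp add: df3_def obstruction base fun_eq_iff zero_prod_def)
qed

lemma deformation_obstruction_update:
  assumes \<Theta>0: "\<Theta> 0 = (mR, mS, f)" and \<Theta>: "\<And>i. \<Theta> i \<in> Cf2 sR sS"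
    and \<theta>: "\<theta> \<in> Cf2 sR sS" and n: "0 < n"
  shows "deformation_obstruction (\<Theta>(n := \<theta>)) n
    = deformation_obstruction (\<Theta>(n := 0)) n - df2 mR mS f \<theta>"
proof -
  obtain \<xi> \<pi> \<phi> where \<theta>_eq: "\<theta> = (\<xi>, \<pi>, \<phi>)" by (cases \<theta>)
  define MR where "MR = (\<lambda>i. fst ((\<Theta>(n := 0)) i))"
  define MS where "MS = (\<lambda>i. fst (snd ((\<Theta>(n := 0)) i)))"
  define F where "F = (\<lambda>i. snd (snd ((\<Theta>(n := 0)) i)))"
  have MR: "\<And>i. biadditive (MR i)" and MS: "\<And>i. biadditive (MS i)" and F: "\<And>i. additive (F i)"
    using Cf2_components[OF \<Theta>]
    by (simp_all add: MR_def MS_def F_def zero_fun_def additive_def)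
  have \<xi>: "biadditive \<xi>" and \<pi>: "biadditive \<pi>"
    using Cf2_components[OF \<theta>] by (simp_all add: \<theta>_eq)
  have zero: "MR n = (\<lambda>_ _. 0)" "MS n = (\<lambda>_ _. 0)" "F n = (\<lambda>_. 0)"
    by (simp_all add: MR_def MS_def F_def zero_fun_def)
  have base: "MR 0 = mR" "MS 0 = mS" "F 0 = f"
    using n by (simp_all add: MR_def MS_def F_def \<Theta>0)
  have "deformation_obstruction (\<Theta>(n := \<theta>)) n
      = (zinb_obstruction (MR(n := \<xi>)) n, zinb_obstruction (MS(n := \<pi>)) n,
         hom_obstruction (MR(n := \<xi>)) (MS(n := \<pi>)) (F(n := \<phi>)) n)"
  proof -
    have "(\<lambda>i. fst ((\<Theta>(n := \<theta>)) i)) = MR(n := \<xi>)"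
      "(\<lambda>i. fst (snd ((\<Theta>(n := \<theta>)) i))) = MS(n := \<pi>)"
      "(\<lambda>i. snd (snd ((\<Theta>(n := \<theta>)) i))) = F(n := \<phi>)"
      by (auto simp: MR_def MS_def F_def \<theta>_eq)
    then show ?thesis
      by (simp add: deformation_obstruction_def)
  qed
  moreover have "deformation_obstruction (\<Theta>(n := 0)) n
      = (zinb_obstruction MR n, zinb_obstruction MS n, hom_obstruction MR MS F n)"
    by (simp add: deformation_obstruction_def MR_def MS_def F_def)
  ultimately show ?thesis
    using zinb_obstruction_update[where M=MR, OF MR \<xi> zero(1) n]
      zinb_obstruction_update[where M=MS, OF MS \<pi> zero(2) n]
      hom_obstruction_update[where MR=MR and MS=MS and F=F and n=n, OF MS F zero n]
    by (simp add: df2_def \<theta>_eq base fun_eq_iff)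
qed

section \<open>Order-by-order construction\<close>

definition deformation_upto ::
    "('k::field \<Rightarrow> 'r::ab_group_add \<Rightarrow> 'r) \<Rightarrow> ('k \<Rightarrow> 's::ab_group_add \<Rightarrow> 's) \<Rightarrow>
     ('r \<Rightarrow> 'r \<Rightarrow> 'r) \<Rightarrow> ('s \<Rightarrow> 's \<Rightarrow> 's) \<Rightarrow> ('r \<Rightarrow> 's) \<Rightarrow> nat \<Rightarrow>
     (nat \<Rightarrow> ('r \<Rightarrow> 'r \<Rightarrow> 'r) \<times> ('s \<Rightarrow> 's \<Rightarrow> 's) \<times> ('r \<Rightarrow> 's)) \<Rightarrow> bool" where
  "deformation_upto sR sS mR mS f N \<Theta> \<longleftrightarrow> \<Theta> 0 = (mR, mS, f)
     \<and> (\<forall>i\<le>N. \<Theta> i \<in> Cf2 sR sS) \<and> (\<forall>k\<le>N. deformation_obstruction \<Theta> k = 0)"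

lemma deformation_upto_cong:
  assumes "deformation_upto sR sS mR mS f N \<Theta>" "\<And>i. i \<le> N \<Longrightarrow> \<Theta>' i = \<Theta> i"
  shows "deformation_upto sR sS mR mS f N \<Theta>'"
  using assms deformation_obstruction_cong[of _ \<Theta>' \<Theta>] by (simp add: deformation_upto_def)

lemma deformation_upto_mono:
  "deformation_upto sR sS mR mS f N \<Theta> \<Longrightarrow> M \<le> N \<Longrightarrow> deformation_upto sR sS mR mS f M \<Theta>"
  by (simp add: deformation_upto_def)

lemma deformation_upto_extend:
  assumes sR: "vector_space sR" and sS: "vector_space sS" and H3: "H3_zero sR sS mR mS f"
    and \<Theta>: "deformation_upto sR sS mR mS f N \<Theta>"
  shows "\<exists>\<theta>. deformation_upto sR sS mR mS f (Suc N) (\<Theta>(Suc N := \<theta>))"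
proof -
  (* Truncation keeps the equations up to order N and makes the order N+1 obstruction the one
     of theta_(N+1) = 0. *)
  define \<Theta>' where "\<Theta>' = (\<lambda>i. if i \<le> N then \<Theta> i else 0)"
  have \<Theta>'0: "\<Theta>' 0 = (mR, mS, f)" and \<Theta>'_Cf2: "\<And>i. \<Theta>' i \<in> Cf2 sR sS"
    using \<Theta> zero_Cf2[OF sR sS] by (auto simp: \<Theta>'_def deformation_upto_def)
  have "deformation_upto sR sS mR mS f N \<Theta>'"
    using \<Theta> by (rule deformation_upto_cong) (simp add: \<Theta>'_def)
  then have lower: "deformation_obstruction \<Theta>' k = 0" if "k < Suc N" for k
    using that by (simp add: deformation_upto_def)
  let ?c = "deformation_obstruction \<Theta>' (Suc N)"
  have "?c \<in> Cf3 sR sS"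
    by (rule deformation_obstruction_Cf3[OF sR sS \<Theta>'_Cf2])
  moreover have "df3 mR mS f ?c = 0"
    by (rule df3_deformation_obstruction[OF \<Theta>'0 \<Theta>'_Cf2 lower])
  ultimately obtain \<theta> where \<theta>: "\<theta> \<in> Cf2 sR sS" and d\<theta>: "df2 mR mS f \<theta> = ?c"
    using H3 by (auto simp: H3_zero_def zero_prod_def zero_fun_def)
  have "\<Theta>'(Suc N := 0) = \<Theta>'"
    by (simp add: \<Theta>'_def fun_eq_iff)
  then have "deformation_obstruction (\<Theta>'(Suc N := \<theta>)) (Suc N) = 0"
    using deformation_obstruction_update[where \<Theta>="\<Theta>'" and n="Suc N", OF \<Theta>'0 \<Theta>'_Cf2 \<theta>] d\<theta> by simp
  then have "deformation_upto sR sS mR mS f (Suc N) (\<Theta>'(Suc N := \<theta>))"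
    using \<Theta>'0 \<Theta>'_Cf2 \<theta> lower deformation_obstruction_cong[of k "\<Theta>'(Suc N := \<theta>)" \<Theta>' for k]
    by (auto simp: deformation_upto_def le_Suc_eq)
  then have "deformation_upto sR sS mR mS f (Suc N) (\<Theta>(Suc N := \<theta>))"
    by (rule deformation_upto_cong) (simp add: \<Theta>'_def)
  then show ?thesis ..
qed

lemma deformation_upto_1:
  assumes R: "zinb_alg sR mR" and S: "zinb_alg sS mS" and f: "zinb_morphism sR sS mR mS f"
    and \<theta>: "\<theta> \<in> Cf2 sR sS" and d\<theta>: "df2 mR mS f \<theta> = (\<lambda>_ _ _. 0, \<lambda>_ _ _. 0, \<lambda>_ _. 0)"
  shows "deformation_upto sR sS mR mS f 1 (\<lambda>i. if i = 0 then (mR, mS, f) else \<theta>)"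
proof -
  have mR: "mR \<in> C2 sR sR" and mS: "mS \<in> C2 sS sS" and "f \<in> C1 sR sS"
    using R S f by (auto simp: zinb_alg_def zinb_morphism_def C2_def C1_def)
  then have base: "(mR, mS, f) \<in> Cf2 sR sS"
    by (simp add: Cf2_def)
  have "deformation_obstruction (\<lambda>i. if i = 0 then (mR, mS, f) else \<theta>) 0 = 0"
    using R S f deformation_obstruction_0[of "\<lambda>i. if i = 0 then (mR, mS, f) else \<theta>" mR mS f]
    by (simp add: zinb_alg_def zinbiel_iff_zinb_assoc zinb_morphism_def
        hom_defect_def zero_prod_def zero_fun_def fun_eq_iff)
  moreover have "df2 mR mS f \<theta> = 0"
    using d\<theta> by (simp add: zero_prod_def zero_fun_def)
  then have "deformation_obstruction (\<lambda>i. if i = 0 then (mR, mS, f) else \<theta>) 1 = 0"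
    using Cf2_components[OF \<theta>]
      deformation_obstruction_1[where \<Theta>="\<lambda>i. if i = 0 then (mR, mS, f) else \<theta>" and \<theta>=\<theta>,
        OF _ _ C2_biadditive[OF mR] C2_biadditive[OF mS]]
    by simp
  ultimately show ?thesis
    using base \<theta> by (auto simp: deformation_upto_def le_Suc_eq)
qed

lemma limit_of_extensions:
  fixes Q :: "nat \<Rightarrow> (nat \<Rightarrow> 'a) \<Rightarrow> bool"
  assumes local: "\<And>N \<Theta> \<Theta>'. Q N \<Theta> \<Longrightarrow> (\<And>i. i \<le> N \<Longrightarrow> \<Theta>' i = \<Theta> i) \<Longrightarrow> Q N \<Theta>'"
    and extend: "\<And>N \<Theta>. Q N \<Theta> \<Longrightarrow> \<exists>a. Q (Suc N) (\<Theta>(Suc N := a))"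
    and start: "Q N\<^sub>0 \<Theta>\<^sub>0"
  shows "\<exists>\<Theta>. (\<forall>i\<le>N\<^sub>0. \<Theta> i = \<Theta>\<^sub>0 i) \<and> (\<forall>N\<ge>N\<^sub>0. Q N \<Theta>)"
proof -
  obtain ext where ext: "\<And>N \<Theta>. Q N \<Theta> \<Longrightarrow> Q (Suc N) (\<Theta>(Suc N := ext N \<Theta>))"
    using extend by metis
  define P where "P = rec_nat \<Theta>\<^sub>0 (\<lambda>k \<Theta>. \<Theta>(Suc (N\<^sub>0 + k) := ext (N\<^sub>0 + k) \<Theta>))"
  have P_0: "P 0 = \<Theta>\<^sub>0" and P_Suc: "P (Suc k) = (P k)(Suc (N\<^sub>0 + k) := ext (N\<^sub>0 + k) (P k))" for k
    by (simp_all add: P_def)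
  have Q_P: "Q (N\<^sub>0 + k) (P k)" for k
  proof (induction k)
    case (Suc k)
    show ?case
      unfolding P_Suc add_Suc_right by (rule ext[OF Suc.IH])
  qed (simp add: P_0 start)
  have stable: "P (k + d) i = P k i" if "i \<le> N\<^sub>0 + k" for k d i
    using that by (induction d) (simp_all add: P_Suc)
  define \<Theta> where "\<Theta> i = P i i" for i
  have \<Theta>_P: "\<Theta> i = P k i" if "i \<le> N\<^sub>0 + k" for i k
  proof (cases "i \<le> k")
    case True
    then show ?thesis
      using stable[of i i "k - i"] by (simp add: \<Theta>_def)
  next
    case False
    then show ?thesis
      using stable[of i k "i - k"] that by (simp add: \<Theta>_def)
  qed
  have "Q N \<Theta>" if "N\<^sub>0 \<le> N" for N
    using local[OF Q_P[of "N - N\<^sub>0"] \<Theta>_P] that by simp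
  moreover have "\<Theta> i = \<Theta>\<^sub>0 i" if "i \<le> N\<^sub>0" for i
    using \<Theta>_P[of i 0] that by (simp add: P_0)
  ultimately show ?thesis by blast
qed

lemma is_deformation_if_deformation_upto:
  assumes "\<And>N. deformation_upto sR sS mR mS f N \<Theta>"
  shows "is_deformation sR sS mR mS f (\<lambda>i. fst (\<Theta> i)) (\<lambda>i. fst (snd (\<Theta> i))) (\<lambda>i. snd (snd (\<Theta> i)))"
proof -
  have "\<Theta> 0 = (mR, mS, f)" "\<Theta> i \<in> Cf2 sR sS" "deformation_obstruction \<Theta> n = 0" for i n
    using assms[of i] assms[of n] by (simp_all add: deformation_upto_def)
  then show ?thesis
    by (simp add: is_deformation_def deformation_obstruction_def zinb_obstruction_def
        hom_obstruction_def zero_prod_def zero_fun_def fun_eq_iff)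
qed

theorem corollary5p3:
  fixes sR :: "'k::field \<Rightarrow> 'r::ab_group_add \<Rightarrow> 'r"
    and sS :: "'k \<Rightarrow> 's::ab_group_add \<Rightarrow> 's"
    and mR :: "'r \<Rightarrow> 'r \<Rightarrow> 'r" and mS :: "'s \<Rightarrow> 's \<Rightarrow> 's" and f :: "'r \<Rightarrow> 's"
    and \<theta>1 :: "('r \<Rightarrow> 'r \<Rightarrow> 'r) \<times> ('s \<Rightarrow> 's \<Rightarrow> 's) \<times> ('r \<Rightarrow> 's)"
  assumes R: "zinb_alg sR mR"
    and S: "zinb_alg sS mS"
    and hf: "zinb_morphism sR sS mR mS f"
    and H3: "H3_zero sR sS mR mS f"
    and cocycle: "\<theta>1 \<in> Cf2 sR sS" "df2 mR mS f \<theta>1 = (\<lambda>_ _ _. 0, \<lambda>_ _ _. 0, \<lambda>_ _. 0)"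
  shows "\<exists>MR MS F. is_deformation sR sS mR mS f MR MS F \<and> (MR 1, MS 1, F 1) = \<theta>1"
proof -
  have sR: "vector_space sR" and sS: "vector_space sS"
    using R S by (simp_all add: zinb_alg_def)
  have "\<exists>\<Theta>. (\<forall>i\<le>1. \<Theta> i = (\<lambda>i. if i = 0 then (mR, mS, f) else \<theta>1) i)
      \<and> (\<forall>N\<ge>1. deformation_upto sR sS mR mS f N \<Theta>)"
    using deformation_upto_cong deformation_upto_extend[OF sR sS H3] deformation_upto_1[OF R S hf cocycle]
    by (rule limit_of_extensions)
  then obtain \<Theta> where agree: "\<forall>i\<le>1. \<Theta> i = (if i = 0 then (mR, mS, f) else \<theta>1)"
    and upto: "\<forall>N\<ge>1. deformation_upto sR sS mR mS f N \<Theta>"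
    by auto
  have "deformation_upto sR sS mR mS f N \<Theta>" for N
    by (rule deformation_upto_mono[where N="Suc N"]) (use upto in simp_all)
  then have "is_deformation sR sS mR mS f (\<lambda>i. fst (\<Theta> i)) (\<lambda>i. fst (snd (\<Theta> i)))
      (\<lambda>i. snd (snd (\<Theta> i)))"
    by (rule is_deformation_if_deformation_upto)
  moreover have "\<Theta> 1 = \<theta>1"
    using agree[rule_format, of 1] by simp
  ultimately show ?thesis
    by (intro exI[where x="\<lambda>i. fst (\<Theta> i)"] exI[where x="\<lambda>i. fst (snd (\<Theta> i))"]
        exI[where x="\<lambda>i. snd (snd (\<Theta> i))"] conjI) simp_all
qed

end
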